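(* Let $r\ge 2$ be an integer, let $d_0,\dots,d_{r-1}>0$ with $\sum_{l=0}^{r-1} d_l=1$, let $p>0$ and $C_\alpha>0$ be constants, and let $n_1,n_2,m$ be integers with $n_2>n_1\ge 1$ and $m>n_1$. Suppose that, as $\Delta x\to 0^+$, quantities $\tau=\tau(\Delta x)\ge 0$ and $\beta_k=\beta_k(\Delta x)>0$ ($k=0,\dots,r-1$) satisfy $\tau=O(\Delta x^m)$ and $$\beta_k=\sum_{l'=n_1}^{n_2-1} a_{l'}\,\Delta x^{l'}+b_k\,\Delta x^{n_2}+O(\Delta x^{n_2+1}),\qquad k=0,\dots,r-1,$$ where the coefficients $a_{n_1},\dots,a_{n_2-1}$ are the same for all $k$, $a_{n_1}\neq 0$, and the constants $b_k$ may differ across $k$. Define $\alpha_k=d_k\bigl(1+C_\alpha(\tau/\beta_k)^p\bigr)$ (with the same constant $C_\alpha$ for every $k$) and $\omega_k=\alpha_k/\sum_{l=0}^{r-1}\alpha_l$. Then for every $k$, $$\omega_k=d_k\Bigl(1+O\bigl(\Delta x^{p(m-n_1)}\bigr)\cdot O\bigl(\Delta x^{n_2-n_1}\bigr)\Bigr)=d_k\Bigl(1+O\bigl(\Delta x^{p(m-n_1)+n_2-n_1}\bigr)\Bigr)\quad\text{as }\Delta x\to 0^+.$$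
   Context: In a WENO-Z type scheme, $d_k$ are linear weights, $\beta_k$ are local smoothness indicators, $\tau$ is a global smoothness indicator, $\alpha_k$ are non-normalized nonlinear weights and $\omega_k$ are normalized nonlinear weights. All $O(\cdot)$ statements refer to the limit $\Delta x\to 0^+$ with all other data fixed. *)

theory Defs
  imports "HOL-Analysis.Analysis" "HOL-Library.Landau_Symbols"
begin

definition wz_alpha :: "(nat \<Rightarrow> real) \<Rightarrow> real \<Rightarrow> real \<Rightarrow> (real \<Rightarrow> real)
    \<Rightarrow> (nat \<Rightarrow> real \<Rightarrow> real) \<Rightarrow> nat \<Rightarrow> real \<Rightarrow> real" where
  "wz_alpha d Ca p tau beta k x = d k * (1 + Ca * (tau x / beta k x) powr p)"

definition wz_omega :: "nat \<Rightarrow> (nat \<Rightarrow> real) \<Rightarrow> real \<Rightarrow> real \<Rightarrow> (real \<Rightarrow> real)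
    \<Rightarrow> (nat \<Rightarrow> real \<Rightarrow> real) \<Rightarrow> nat \<Rightarrow> real \<Rightarrow> real" where
  "wz_omega r d Ca p tau beta k x =
     wz_alpha d Ca p tau beta k x / (\<Sum>l<r. wz_alpha d Ca p tau beta l x)"

end

theory Submission
  imports Defs
begin

text \<open>Write \<open>u\<^sub>l = (\<tau> / \<beta>\<^sub>l) powr p\<close>. Since the \<open>d\<^sub>l\<close> sum to 1,
  \<open>\<omega>\<^sub>k / d\<^sub>k - 1 = C\<^sub>\<alpha> (\<Sum>\<^sub>l d\<^sub>l (u\<^sub>k - u\<^sub>l)) / (1 + C\<^sub>\<alpha> \<Sum>\<^sub>l d\<^sub>l u\<^sub>l)\<close>, and the
  denominator is at least 1. By the mean value theorem for \<open>t powr -p\<close>, the difference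
  \<open>u\<^sub>k - u\<^sub>l = \<tau> powr p * (\<beta>\<^sub>k powr -p - \<beta>\<^sub>l powr -p)\<close> is
  \<open>O(\<Delta>x powr (m p)) * O(\<Delta>x powr (-n1 (p + 1))) * \<bar>\<beta>\<^sub>k - \<beta>\<^sub>l\<bar>\<close>: the common leading term
  \<open>a n1 * \<Delta>x ^ n1\<close> keeps every \<open>\<beta>\<^sub>l\<close> above \<open>a n1 / 2 * \<Delta>x ^ n1\<close> and cancels in
  \<open>\<beta>\<^sub>k - \<beta>\<^sub>l = O(\<Delta>x ^ n2)\<close>.\<close>

lemma abs_powr_neg_diff_le:
  fixes y1 y2 c p :: real
  assumes "0 < c" "c \<le> y1" "c \<le> y2" "0 \<le> p"
  shows "\<bar>y1 powr -p - y2 powr -p\<bar> \<le> p * c powr (-p-1) * \<bar>y1 - y2\<bar>"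
proof -
  have mvt: "\<bar>y1 powr -p - y2 powr -p\<bar> \<le> p * c powr (-p-1) * \<bar>y1 - y2\<bar>"
    if "c \<le> y1" "y1 < y2" for y1 y2
  proof -
    have "\<And>z. y1 \<le> z \<Longrightarrow> z \<le> y2 \<Longrightarrow>
        ((\<lambda>z. z powr -p) has_real_derivative -p * z powr (-p-1)) (at z)"
      using that \<open>0 < c\<close> by (intro has_real_derivative_powr) auto
    from MVT2[OF \<open>y1 < y2\<close> this] obtain z where z: "y1 < z" "z < y2"
      and eq: "y2 powr -p - y1 powr -p = (y2 - y1) * (-p * z powr (-p-1))" by blast
    have "z powr (-p-1) \<le> c powr (-p-1)"
      using that z \<open>0 < c\<close> \<open>0 \<le> p\<close> by (intro powr_mono2') auto
    then have "(y2 - y1) * (p * z powr (-p-1)) \<le> (y2 - y1) * (p * c powr (-p-1))"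
      using that \<open>0 \<le> p\<close> by (intro mult_left_mono) auto
    moreover have "\<bar>y1 powr -p - y2 powr -p\<bar> = (y2 - y1) * (p * z powr (-p-1))"
    proof -
      have "y1 powr -p - y2 powr -p = (y2 - y1) * (p * z powr (-p-1))"
        using eq by (simp add: algebra_simps)
      then show ?thesis using that \<open>0 \<le> p\<close> by simp
    qed
    ultimately show ?thesis using that by (simp add: abs_of_neg mult_ac)
  qed
  consider "y1 = y2" | "y1 < y2" | "y2 < y1" by linarith
  then show ?thesis
    using mvt[of y1 y2] mvt[of y2 y1] assms by cases (auto simp: abs_minus_commute)
qed

lemma powr_neg_diff_bigo:
  fixes f1 f2 g :: "'a \<Rightarrow> real"
  assumes "0 < c" "0 \<le> p" "eventually (\<lambda>x. 0 < g x) F"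
    and "eventually (\<lambda>x. c * g x \<le> f1 x) F" "eventually (\<lambda>x. c * g x \<le> f2 x) F"
  shows "(\<lambda>x. f1 x powr -p - f2 x powr -p) \<in> O[F](\<lambda>x. g x powr (-p-1) * (f1 x - f2 x))"
proof (rule bigoI[of _ "p * c powr (-p-1)"])
  show "eventually (\<lambda>x. norm (f1 x powr -p - f2 x powr -p)
          \<le> p * c powr (-p-1) * norm (g x powr (-p-1) * (f1 x - f2 x))) F"
    using assms(3-5)
  proof eventually_elim
    case (elim x)
    then have "\<bar>f1 x powr -p - f2 x powr -p\<bar> \<le> p * (c * g x) powr (-p-1) * \<bar>f1 x - f2 x\<bar>"
      using assms(1,2) by (intro abs_powr_neg_diff_le) auto
    then show ?case
      using elim assms(1) by (simp add: powr_mult abs_mult mult_ac)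
  qed
qed

lemma quotient_powr_diff_bigo:
  fixes t f1 f2 g h e :: "'a \<Rightarrow> real"
  assumes "t \<in> O[F](h)" "eventually (\<lambda>x. 0 \<le> t x) F"
    and "0 < c" "0 \<le> p" "eventually (\<lambda>x. 0 < g x) F"
    and "eventually (\<lambda>x. c * g x \<le> f1 x) F" "eventually (\<lambda>x. c * g x \<le> f2 x) F"
    and "(\<lambda>x. f1 x - f2 x) \<in> O[F](e)"
  shows "(\<lambda>x. (t x / f1 x) powr p - (t x / f2 x) powr p)
           \<in> O[F](\<lambda>x. \<bar>h x\<bar> powr p * (g x powr (-p-1) * e x))"
proof -
  from assms(2,5-7)
  have "eventually (\<lambda>x. (t x / f1 x) powr p - (t x / f2 x) powr p
          = \<bar>t x\<bar> powr p * (f1 x powr -p - f2 x powr -p)) F"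
  proof eventually_elim
    case (elim x)
    then have "0 < f1 x" "0 < f2 x"
      using assms(3) by (auto intro: less_le_trans[OF mult_pos_pos])
    with elim show ?case
      by (simp add: powr_divide powr_minus_divide right_diff_distrib)
  qed
  moreover have "(\<lambda>x. \<bar>t x\<bar> powr p * (f1 x powr -p - f2 x powr -p))
      \<in> O[F](\<lambda>x. \<bar>h x\<bar> powr p * (g x powr (-p-1) * e x))"
  proof (rule landau_o.big.mult)
    show "(\<lambda>x. \<bar>t x\<bar> powr p) \<in> O[F](\<lambda>x. \<bar>h x\<bar> powr p)"
      using assms(1,4) by (rule bigo_powr)
    show "(\<lambda>x. f1 x powr -p - f2 x powr -p) \<in> O[F](\<lambda>x. g x powr (-p-1) * e x)"
      using powr_neg_diff_bigo[OF assms(3-7)] landau_o.big.mult_left[OF assms(8)]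
      by (rule landau_o.big_trans)
  qed
  ultimately show ?thesis by (subst landau_o.big.in_cong)
qed

lemma leading_term_pos_lower_bound:
  fixes f g :: "'a \<Rightarrow> real"
  assumes "(\<lambda>x. f x - A * g x) \<in> o[F](g)" "F \<noteq> bot" "A \<noteq> 0"
    and "eventually (\<lambda>x. 0 < f x) F" "eventually (\<lambda>x. 0 < g x) F"
  shows "0 < A" and "eventually (\<lambda>x. A / 2 * g x \<le> f x) F"
proof -
  have "0 < \<bar>A\<bar> / 2" using assms(3) by simp
  from landau_o.smallD[OF assms(1) this] assms(4,5)
  have close: "eventually (\<lambda>x. \<bar>f x - A * g x\<bar> \<le> \<bar>A\<bar> / 2 * g x \<and> 0 < f x \<and> 0 < g x) F"
    by eventually_elim simp
  show "0 < A"
  proof (rule ccontr)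
    assume "\<not> 0 < A"
    with assms(3) have "A < 0" by simp
    from close have "eventually (\<lambda>x. False) F"
      by eventually_elim (use \<open>A < 0\<close> in \<open>simp add: abs_if mult_neg_pos split: if_splits\<close>)
    with assms(2) show False by simp
  qed
  from close show "eventually (\<lambda>x. A / 2 * g x \<le> f x) F"
    by eventually_elim (use \<open>0 < A\<close> in \<open>simp add: abs_if split: if_splits\<close>)
qed

lemma power_smallo_power_at_right_0:
  assumes "n < j"
  shows "(\<lambda>x::real. x ^ j) \<in> o[at_right 0](\<lambda>x. x ^ n)"
proof -
  have "(\<lambda>x::real. x ^ (j - n)) \<in> o[at_right 0](\<lambda>_. 1)"
    using assms by (intro smalloI_tendsto) (auto intro!: tendsto_eq_intros)
  then have "(\<lambda>x::real. x ^ n * x ^ (j - n)) \<in> o[at_right 0](\<lambda>x. x ^ n * 1)"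
    by (intro landau_o.big_small_mult) simp_all
  with assms show ?thesis by (simp add: power_add[symmetric])
qed

lemma expansion_minus_leading_term_smallo:
  fixes f :: "real \<Rightarrow> real" and a :: "nat \<Rightarrow> real"
  assumes "n1 < n2"
    and "(\<lambda>x. f x - (\<Sum>l\<in>{n1..<n2}. a l * x ^ l) - B * x ^ n2) \<in> O[at_right 0](\<lambda>x. x ^ (n2 + 1))"
  shows "(\<lambda>x. f x - a n1 * x ^ n1) \<in> o[at_right 0](\<lambda>x. x ^ n1)"
proof -
  have split: "f x - a n1 * x ^ n1 = (f x - (\<Sum>l\<in>{n1..<n2}. a l * x ^ l) - B * x ^ n2)
      + (\<Sum>l\<in>{Suc n1..<n2}. a l * x ^ l) + B * x ^ n2" for x
    using assms(1) by (simp add: sum.atLeast_Suc_lessThan)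
  have "(\<lambda>x. f x - (\<Sum>l\<in>{n1..<n2}. a l * x ^ l) - B * x ^ n2) \<in> o[at_right 0](\<lambda>x. x ^ n1)"
    using assms by (intro landau_o.big_small_trans[OF assms(2)] power_smallo_power_at_right_0) simp
  moreover have "(\<lambda>x. \<Sum>l\<in>{Suc n1..<n2}. a l * x ^ l) \<in> o[at_right 0](\<lambda>x. x ^ n1)"
    by (intro big_sum_in_smallo) (simp add: power_smallo_power_at_right_0)
  moreover have "(\<lambda>x. B * x ^ n2) \<in> o[at_right 0](\<lambda>x. x ^ n1)"
    using assms(1) by (simp add: power_smallo_power_at_right_0)
  ultimately show ?thesis
    unfolding split by (rule sum_in_smallo(1)[OF sum_in_smallo(1)])
qed

lemma expansions_diff_bigo:
  fixes f g P :: "real \<Rightarrow> real"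
  assumes "(\<lambda>x. f x - P x - B1 * x ^ n) \<in> O[at_right 0](\<lambda>x. x ^ (n + 1))"
    and "(\<lambda>x. g x - P x - B2 * x ^ n) \<in> O[at_right 0](\<lambda>x. x ^ (n + 1))"
  shows "(\<lambda>x. f x - g x) \<in> O[at_right 0](\<lambda>x. x ^ n)"
proof -
  have higher: "(\<lambda>x::real. x ^ (n + 1)) \<in> O[at_right 0](\<lambda>x. x ^ n)"
    by (intro landau_o.small_imp_big power_smallo_power_at_right_0) simp
  have split: "f x - g x = (f x - P x - B1 * x ^ n) - (g x - P x - B2 * x ^ n) + (B1 - B2) * x ^ n"
    for x by (simp add: algebra_simps)
  show ?thesis
    unfolding split
    using landau_o.big_trans[OF assms(1) higher] landau_o.big_trans[OF assms(2) higher]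
    by (intro sum_in_bigo(1)[OF sum_in_bigo(2)]) simp_all
qed

lemma wz_omega_deviation_le:
  assumes d_pos: "\<And>l. l < r \<Longrightarrow> 0 < d l" and d_sum: "(\<Sum>l<r. d l) = 1"
    and "0 \<le> Ca" and "k < r"
  shows "\<bar>wz_omega r d Ca p tau beta k x / d k - 1\<bar>
           \<le> Ca * (\<Sum>l<r. d l * \<bar>(tau x / beta k x) powr p - (tau x / beta l x) powr p\<bar>)"
proof -
  define u where "u l = (tau x / beta l x) powr p" for l
  define S where "S = (\<Sum>l<r. d l * u l)"
  have "0 \<le> S"
    unfolding S_def u_def using d_pos by (intro sum_nonneg) (simp add: less_imp_le)
  then have den_ge: "1 \<le> 1 + Ca * S" using \<open>0 \<le> Ca\<close> by simp
  have "(\<Sum>l<r. wz_alpha d Ca p tau beta l x) = 1 + Ca * S"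
    by (simp add: wz_alpha_def u_def S_def algebra_simps sum.distrib sum_distrib_left d_sum)
  moreover have "0 < d k" using d_pos \<open>k < r\<close> .
  ultimately have "wz_omega r d Ca p tau beta k x / d k = (1 + Ca * u k) / (1 + Ca * S)"
    by (simp add: wz_omega_def wz_alpha_def u_def)
  then have "wz_omega r d Ca p tau beta k x / d k - 1 = Ca * (u k - S) / (1 + Ca * S)"
    using den_ge by (simp add: field_simps)
  also have "u k - S = (\<Sum>l<r. d l * (u k - u l))"
    by (simp add: S_def right_diff_distrib sum_subtractf sum_distrib_right[symmetric] d_sum)
  finally have "\<bar>wz_omega r d Ca p tau beta k x / d k - 1\<bar>
      = Ca * \<bar>\<Sum>l<r. d l * (u k - u l)\<bar> / (1 + Ca * S)"
    using den_ge \<open>0 \<le> Ca\<close> by (simp add: abs_mult)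
  also have "\<dots> \<le> Ca * \<bar>\<Sum>l<r. d l * (u k - u l)\<bar>"
    using divide_left_mono[OF den_ge, of "Ca * \<bar>\<Sum>l<r. d l * (u k - u l)\<bar>"] den_ge \<open>0 \<le> Ca\<close>
    by simp
  also have "\<dots> \<le> Ca * (\<Sum>l<r. d l * \<bar>u k - u l\<bar>)"
    using sum_abs[of "\<lambda>l. d l * (u k - u l)" "{..<r}"] d_pos \<open>0 \<le> Ca\<close>
    by (intro mult_left_mono) (simp_all add: abs_mult less_imp_le)
  finally show ?thesis by (simp add: u_def)
qed

lemma wz_omega_deviation_bigo:
  assumes "\<And>l. l < r \<Longrightarrow> 0 < d l" "(\<Sum>l<r. d l) = 1" "0 \<le> Ca" "k < r"
    and "\<And>l. l < r \<Longrightarrow> (\<lambda>x. (tau x / beta k x) powr p - (tau x / beta l x) powr p) \<in> O[F](g)"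
  shows "(\<lambda>x. wz_omega r d Ca p tau beta k x / d k - 1) \<in> O[F](g)"
proof -
  let ?bound = "\<lambda>x. Ca * (\<Sum>l<r. d l * \<bar>(tau x / beta k x) powr p - (tau x / beta l x) powr p\<bar>)"
  have "(\<lambda>x. wz_omega r d Ca p tau beta k x / d k - 1) \<in> O[F](?bound)"
  proof (intro landau_o.big_mono always_eventually allI)
    fix x
    have "\<bar>wz_omega r d Ca p tau beta k x / d k - 1\<bar> \<le> ?bound x"
      using assms(1-4) by (rule wz_omega_deviation_le)
    then show "norm (wz_omega r d Ca p tau beta k x / d k - 1) \<le> norm (?bound x)"
      by simp
  qed
  also have "?bound \<in> O[F](g)"
    using assms(5) by (auto intro!: big_sum_in_bigo)
  finally show ?thesis .
qed

theorem lemma3p1: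
  fixes r n1 n2 m :: nat
    and d :: "nat \<Rightarrow> real" and p Ca :: real
    and tau :: "real \<Rightarrow> real" and beta :: "nat \<Rightarrow> real \<Rightarrow> real"
    and a b :: "nat \<Rightarrow> real"
  assumes "r \<ge> 2"
    and "\<And>l. l < r \<Longrightarrow> d l > 0"
    and "(\<Sum>l<r. d l) = 1"
    and "p > 0" and "Ca > 0"
    and "1 \<le> n1" and "n1 < n2" and "n1 < m"
    and "eventually (\<lambda>x. tau x \<ge> 0) (at_right 0)"
    and "\<And>k. k < r \<Longrightarrow> eventually (\<lambda>x. beta k x > 0) (at_right 0)"
    and "tau \<in> O[at_right 0](\<lambda>x. x ^ m)"
    and "\<And>k. k < r \<Longrightarrow>
          (\<lambda>x. beta k x - (\<Sum>l\<in>{n1..<n2}. a l * x ^ l) - b k * x ^ n2)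
            \<in> O[at_right 0](\<lambda>x. x ^ (n2 + 1))"
    and "a n1 \<noteq> 0"
    and "k < r"
  shows "(\<lambda>x. wz_omega r d Ca p tau beta k x / d k - 1)
           \<in> O[at_right 0](\<lambda>x. x powr (p * (real m - real n1) + (real n2 - real n1)))"
proof -
  let ?F = "at_right (0::real)"
  have x_pos: "eventually (\<lambda>x. 0 < x) ?F"
    by (simp add: eventually_at_right_less)
  then have power_pos: "eventually (\<lambda>x. 0 < x ^ n1) ?F"
    by eventually_elim simp
  have leading: "(\<lambda>x. beta l x - a n1 * x ^ n1) \<in> o[?F](\<lambda>x. x ^ n1)" if "l < r" for l
    using assms(7) assms(12)[OF that] by (rule expansion_minus_leading_term_smallo)
  have lower: "0 < a n1 \<and> eventually (\<lambda>x. a n1 / 2 * x ^ n1 \<le> beta l x) ?F" if "l < r" for l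
    using leading_term_pos_lower_bound[OF leading[OF that] _ assms(13) assms(10)[OF that] power_pos]
    by simp
  have rate: "(\<lambda>x. (tau x / beta k x) powr p - (tau x / beta l x) powr p)
      \<in> O[?F](\<lambda>x. x powr (p * (real m - real n1) + (real n2 - real n1)))" if "l < r" for l
  proof -
    have diff: "(\<lambda>x. beta k x - beta l x) \<in> O[?F](\<lambda>x. x ^ n2)"
      using assms(12)[OF assms(14)] assms(12)[OF that] by (rule expansions_diff_bigo)
    have "0 < a n1 / 2" using lower[OF that] by simp
    have "(\<lambda>x. (tau x / beta k x) powr p - (tau x / beta l x) powr p)
        \<in> O[?F](\<lambda>x. \<bar>x ^ m\<bar> powr p * ((x ^ n1) powr (-p-1) * x ^ n2))"
      using assms(11,9) \<open>0 < a n1 / 2\<close> _ power_pos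
        conjunct2[OF lower[OF assms(14)]] conjunct2[OF lower[OF that]] diff
      by (rule quotient_powr_diff_bigo) (use assms(4) in simp)
    also have "(\<lambda>x. \<bar>x ^ m\<bar> powr p * ((x ^ n1) powr (-p-1) * x ^ n2))
        \<in> \<Theta>[?F](\<lambda>x. x powr (p * (real m - real n1) + (real n2 - real n1)))"
      using x_pos
      by (intro bigthetaI_cong, eventually_elim)
         (simp add: powr_realpow[symmetric] powr_powr powr_add[symmetric] algebra_simps)
    finally show ?thesis .
  qed
  show ?thesis
    using assms(2,3,5,14) rate by (intro wz_omega_deviation_bigo) simp_all
qed

end
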